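(* Let $G$ be a triangle-free graph and let $H_G$ be the graph with $V(H_G)=V(G)\cup\{a,b,c,d\}$ (four new vertices) and $E(H_G)=E(G)\cup\{ab,cd\}\cup E'$, where $E'=\{bv: v\in V(G)\}\cup\{cv: v\in V(G)\}$. Then there exists a line geodetic set $Q$ of $H_G$ of minimum cardinality such that $Q\cap E'=\emptyset$.
   Context: All graphs are finite, simple and undirected. The line graph $L(G)$ has vertex set $E(G)$, two edges adjacent iff they share an endpoint. For a graph $H$, a set $S\subseteq E(H)$ is a line geodetic set of $H$ if every edge of $E(H)\setminus S$ lies on some shortest path in $L(H)$ between two edges of $S$; equivalently, $S$ is a geodetic set of $L(H)$, where a set $T$ of vertices of a graph $F$ is geodetic if every vertex of $F$ lies on some shortest path between two vertices of $T$. *)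

theory Defs
  imports Main
begin

definition simple_graph :: "'a set \<Rightarrow> 'a set set \<Rightarrow> bool" where
  "simple_graph V E \<longleftrightarrow> finite V \<and>
     E \<subseteq> {{u, v} | u v. u \<in> V \<and> v \<in> V \<and> u \<noteq> v}"

definition triangle_free :: "'a set set \<Rightarrow> bool" where
  "triangle_free E \<longleftrightarrow> \<not> (\<exists>u v w. {u, v} \<in> E \<and> {v, w} \<in> E \<and> {u, w} \<in> E)"

definition walk :: "('v \<Rightarrow> 'v \<Rightarrow> bool) \<Rightarrow> 'v set \<Rightarrow> 'v list \<Rightarrow> bool" where
  "walk adj V p \<longleftrightarrow> p \<noteq> [] \<and> set p \<subseteq> V \<and>
     (\<forall>i. Suc i < length p \<longrightarrow> adj (p ! i) (p ! Suc i))"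

definition shortest_path :: "('v \<Rightarrow> 'v \<Rightarrow> bool) \<Rightarrow> 'v set \<Rightarrow> 'v \<Rightarrow> 'v \<Rightarrow> 'v list \<Rightarrow> bool" where
  "shortest_path adj V u v p \<longleftrightarrow> walk adj V p \<and> hd p = u \<and> last p = v \<and>
     (\<forall>q. walk adj V q \<and> hd q = u \<and> last q = v \<longrightarrow> length p \<le> length q)"

definition geodetic_set :: "('v \<Rightarrow> 'v \<Rightarrow> bool) \<Rightarrow> 'v set \<Rightarrow> 'v set \<Rightarrow> bool" where
  "geodetic_set adj V T \<longleftrightarrow> T \<subseteq> V \<and>
     (\<forall>x\<in>V. \<exists>u\<in>T. \<exists>v\<in>T. \<exists>p. shortest_path adj V u v p \<and> x \<in> set p)"

definition line_adj :: "'a set \<Rightarrow> 'a set \<Rightarrow> bool" where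
  "line_adj e f \<longleftrightarrow> e \<noteq> f \<and> e \<inter> f \<noteq> {}"

definition line_geodetic_set :: "'a set set \<Rightarrow> 'a set set \<Rightarrow> bool" where
  "line_geodetic_set E S \<longleftrightarrow> geodetic_set line_adj E S"

definition Eprime :: "'a set \<Rightarrow> 'a \<Rightarrow> 'a \<Rightarrow> 'a set set" where
  "Eprime V b c = {{b, v} | v. v \<in> V} \<union> {{c, v} | v. v \<in> V}"

definition HG_vertices :: "'a set \<Rightarrow> 'a \<Rightarrow> 'a \<Rightarrow> 'a \<Rightarrow> 'a \<Rightarrow> 'a set" where
  "HG_vertices V a b c d = V \<union> {a, b, c, d}"

definition HG_edges :: "'a set set \<Rightarrow> 'a set \<Rightarrow> 'a \<Rightarrow> 'a \<Rightarrow> 'a \<Rightarrow> 'a \<Rightarrow> 'a set set" where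
  "HG_edges E V a b c d = E \<union> {{a, b}, {c, d}} \<union> Eprime V b c"

end

theory Submission
  imports Defs
begin

text \<open>The edges ab and cd of H_G are pendant, so they lie in every line geodetic set, and every
  edge bv, cv lies on the geodesic ab, bv, cv, cd between them. Hence in a minimum line geodetic
  set each edge of E' can be traded for an edge of G at the same vertex v (or for ab if v is
  isolated) without increasing the size. Only the edges of G need an argument: every edge is
  within distance 2 of an edge of E', so a geodesic through xy \<in> E that starts or ends in E'
  is u, xy, w with x \<in> u and y \<in> w. Unless xy itself is chosen, the traded edges are edges
  of G through x avoiding y and through y avoiding x; as G is triangle-free they are disjoint,
  so they again span a geodesic through xy.\<close>

lemma successively_iff_nth:
  "successively P xs \<longleftrightarrow> (\<forall>i. Suc i < length xs \<longrightarrow> P (xs ! i) (xs ! Suc i))"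
proof (induction P xs rule: successively.induct)
  case (3 P x y xs)
  then show ?case
    by (auto simp: less_Suc_eq_0_disj)
qed auto

lemma walk_iff_successively:
  "walk adj V p \<longleftrightarrow> p \<noteq> [] \<and> set p \<subseteq> V \<and> successively adj p"
  unfolding walk_def successively_iff_nth ..

lemma shortest_path_singleton: "x \<in> V \<Longrightarrow> shortest_path adj V x x [x]"
  unfolding shortest_path_def walk_iff_successively by (auto simp: Suc_le_eq)

lemma shortest_path_interior_nonadjacent:
  assumes "shortest_path adj V u v (xs @ w1 # x # w2 # ys)"
  shows "w1 \<noteq> w2 \<and> \<not> adj w1 w2"
proof -
  let ?p = "xs @ w1 # x # w2 # ys"
  have walk: "walk adj V ?p" and ends: "hd ?p = u" "last ?p = v"
    and minimal: "\<And>q. walk adj V q \<Longrightarrow> hd q = u \<Longrightarrow> last q = v \<Longrightarrow> length ?p \<le> length q"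
    using assms unfolding shortest_path_def by auto
  have same_ends: "hd (xs @ w1 # zs @ w2 # ys) = u" "last (xs @ w1 # zs @ w2 # ys) = v" for zs
    using ends by (cases xs; cases ys; simp)+
  show ?thesis
  proof (intro conjI notI)
    assume "w1 = w2"
    then have "walk adj V (xs @ w1 # ys)"
      using walk by (auto simp: walk_iff_successively successively_append_iff successively_Cons)
    moreover have "hd (xs @ w1 # ys) = u" "last (xs @ w1 # ys) = v"
      using same_ends[of "[]"] \<open>w1 = w2\<close> by (cases xs; cases ys; simp)+
    ultimately show False using minimal by fastforce
  next
    assume "adj w1 w2"
    then have "walk adj V (xs @ w1 # w2 # ys)"
      using walk by (auto simp: walk_iff_successively successively_append_iff successively_Cons)
    then show False using minimal same_ends[of "[]"] by fastforce
  qed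
qed

lemma interior_of_list:
  assumes "x \<in> set p" "x \<noteq> hd p" "x \<noteq> last p"
  obtains xs w1 w2 ys where "p = xs @ w1 # x # w2 # ys"
proof -
  obtain l1 l2 where p: "p = l1 @ x # l2" using assms(1) by (meson split_list)
  have "l1 \<noteq> []" "l2 \<noteq> []" using assms(2,3) p by auto
  then obtain xs w1 w2 ys where "l1 = xs @ [w1]" "l2 = w2 # ys"
    by (metis list.exhaust rev_exhaust)
  then show ?thesis using p that by auto
qed

lemma walk_length_le2:
  assumes "walk adj V q" "length q \<le> 2"
  shows "hd q = last q \<or> adj (hd q) (last q)"
  using assms by (cases q; cases "tl q") (auto simp: walk_iff_successively)

lemma walk_length3:
  assumes "walk adj V q" "length q = 3"
  shows "\<exists>m\<in>V. adj (hd q) m \<and> adj m (last q)"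
proof -
  obtain x m z where "q = [x, m, z]"
    using assms(2) by (auto simp: numeral_3_eq_3 length_Suc_conv)
  then show ?thesis using assms(1) by (auto simp: walk_iff_successively)
qed

lemma shortest_path_length3:
  assumes "walk adj V [x, y, z]" "x \<noteq> z" "\<not> adj x z"
  shows "shortest_path adj V x z [x, y, z]"
  unfolding shortest_path_def
proof (intro conjI allI impI)
  fix q assume q: "walk adj V q \<and> hd q = x \<and> last q = z"
  then show "length [x, y, z] \<le> length q"
    using walk_length_le2[of adj V q] assms(2,3) by fastforce
qed (use assms in auto)

lemma shortest_path_length4:
  assumes "walk adj V [x, y, z, w]" "x \<noteq> w" "\<not> adj x w" "\<not> (\<exists>m\<in>V. adj x m \<and> adj m w)"
  shows "shortest_path adj V x w [x, y, z, w]"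
  unfolding shortest_path_def
proof (intro conjI allI impI)
  fix q assume q: "walk adj V q \<and> hd q = x \<and> last q = w"
  then show "length [x, y, z, w] \<le> length q"
    using walk_length_le2[of adj V q] walk_length3[of adj V q] assms(2-4) by fastforce
qed (use assms in auto)

lemma simplicial_in_geodetic_set:
  assumes "geodetic_set adj V S" "x \<in> V"
    and "\<And>w1 w2. w1 \<in> V \<Longrightarrow> w2 \<in> V \<Longrightarrow> adj w1 x \<Longrightarrow> adj x w2 \<Longrightarrow> w1 = w2 \<or> adj w1 w2"
  shows "x \<in> S"
proof (rule ccontr)
  assume "x \<notin> S"
  obtain u v p where "u \<in> S" "v \<in> S" and sp: "shortest_path adj V u v p" and "x \<in> set p"
    using assms(1,2) unfolding geodetic_set_def by blast
  moreover have "hd p = u" "last p = v" "walk adj V p" using sp unfolding shortest_path_def by auto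
  ultimately obtain xs w1 w2 ys where p: "p = xs @ w1 # x # w2 # ys"
    using \<open>x \<notin> S\<close> interior_of_list by metis
  then have "w1 \<in> V" "w2 \<in> V" "adj w1 x" "adj x w2"
    using \<open>walk adj V p\<close> by (auto simp: walk_iff_successively successively_append_iff)
  then show False
    using assms(3) shortest_path_interior_nonadjacent sp unfolding p by metis
qed

lemma geodetic_set_carrier: "geodetic_set adj V V"
  unfolding geodetic_set_def using shortest_path_singleton by fastforce

lemma line_adj_sym: "line_adj e f \<longleftrightarrow> line_adj f e"
  unfolding line_adj_def by blast

lemma line_adjI: "e \<noteq> f \<Longrightarrow> x \<in> e \<Longrightarrow> x \<in> f \<Longrightarrow> line_adj e f"
  unfolding line_adj_def by blast

lemma pendant_edge_in_line_geodetic_set: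
  assumes "line_geodetic_set E S" "e \<in> E" "\<And>f. f \<in> E \<Longrightarrow> line_adj f e \<Longrightarrow> x \<in> f"
  shows "e \<in> S"
  using assms(1,2) unfolding line_geodetic_set_def
proof (rule simplicial_in_geodetic_set)
  fix w1 w2 assume "w1 \<in> E" "w2 \<in> E" "line_adj w1 e" "line_adj e w2"
  then have "x \<in> w1" "x \<in> w2" using assms(3) line_adj_sym by blast+
  then show "w1 = w2 \<or> line_adj w1 w2" unfolding line_adj_def by blast
qed

lemma simple_graph_edgeD:
  "simple_graph V E \<Longrightarrow> e \<in> E \<Longrightarrow> \<exists>y z. e = {y, z} \<and> y \<in> V \<and> z \<in> V \<and> y \<noteq> z"
  unfolding simple_graph_def by blast

lemma simple_graph_edge_eq:
  assumes "simple_graph V E" "e \<in> E" "y \<in> e" "z \<in> e" "y \<noteq> z"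
  shows "e = {y, z}"
  using simple_graph_edgeD[OF assms(1,2)] assms(3-5) by auto

lemma triangle_free_edges_disjoint:
  assumes "simple_graph V E" "triangle_free E" "{y, z} \<in> E"
    and "e \<in> E" "y \<in> e" "z \<notin> e" and "f \<in> E" "z \<in> f" "y \<notin> f"
  shows "e \<inter> f = {}"
proof (rule ccontr)
  assume "e \<inter> f \<noteq> {}"
  then obtain w where "w \<in> e" "w \<in> f" by blast
  then have "e = {y, w}" "f = {w, z}"
    using simple_graph_edge_eq[OF assms(1)] assms(4-9) by (metis insert_commute)+
  then show False
    using assms(2-4,7) unfolding triangle_free_def by blast
qed

locale HG_construction =
  fixes V :: "'a set" and E :: "'a set set" and a b c d :: 'a
  assumes simple: "simple_graph V E" and triangle_free: "triangle_free E"
    and new_vertices: "a \<notin> V" "b \<notin> V" "c \<notin> V" "d \<notin> V"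
    and distinct: "distinct [a, b, c, d]"
begin

abbreviation H :: "'a set set" where "H \<equiv> HG_edges E V a b c d"

abbreviation E' :: "'a set set" where "E' \<equiv> Eprime V b c"

lemma E_subset_V: "e \<in> E \<Longrightarrow> e \<subseteq> V"
  using simple_graph_edgeD[OF simple] by blast

lemma E'_cases:
  assumes "e \<in> E'"
  obtains v where "v \<in> V" "e = {b, v}" | v where "v \<in> V" "e = {c, v}"
  using assms unfolding Eprime_def by blast

lemma E'_inter_V: "s \<in> E' \<Longrightarrow> \<exists>v. s \<inter> V = {v}"
  using new_vertices by (elim E'_cases) auto

lemma H_cases:
  assumes "e \<in> H"
  obtains "e \<in> E" | "e = {a, b}" | "e = {c, d}" | "e \<in> E'"
  using assms unfolding HG_edges_def by blast

lemma in_H [simp]: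
  "{a, b} \<in> H" "{c, d} \<in> H" "v \<in> V \<Longrightarrow> {b, v} \<in> H" "v \<in> V \<Longrightarrow> {c, v} \<in> H"
  "e \<in> E \<Longrightarrow> e \<in> H" "e \<in> E' \<Longrightarrow> e \<in> H"
  unfolding HG_edges_def Eprime_def by blast+

lemma not_in_E' [simp]: "{a, b} \<notin> E'" "{c, d} \<notin> E'" "e \<in> E \<Longrightarrow> e \<notin> E'"
  using new_vertices distinct E_subset_V unfolding Eprime_def by (auto simp: doubleton_eq_iff)

lemma finite_H: "finite H"
proof -
  have "finite V" using simple unfolding simple_graph_def by blast
  then have "finite E" using E_subset_V by (meson Pow_iff finite_Pow_iff finite_subset subsetI)
  moreover have "E' = (\<lambda>v. {b, v}) ` V \<union> (\<lambda>v. {c, v}) ` V" unfolding Eprime_def by blast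
  ultimately show ?thesis using \<open>finite V\<close> unfolding HG_edges_def by simp
qed

lemma no_edge_through_b_and_c: "f \<in> H \<Longrightarrow> b \<in> f \<Longrightarrow> c \<in> f \<Longrightarrow> False"
  using new_vertices distinct E_subset_V by (elim H_cases E'_cases) auto

lemma neighbours_of_ab: "f \<in> H \<Longrightarrow> line_adj f {a, b} \<Longrightarrow> b \<in> f"
  using new_vertices distinct E_subset_V unfolding line_adj_def by (elim H_cases E'_cases) auto

lemma neighbours_of_cd: "f \<in> H \<Longrightarrow> line_adj f {c, d} \<Longrightarrow> c \<in> f"
  using new_vertices distinct E_subset_V unfolding line_adj_def by (elim H_cases E'_cases) auto

lemma shortest_path_ab_cd:
  assumes "v \<in> V"
  shows "shortest_path line_adj H {a, b} {c, d} [{a, b}, {b, v}, {c, v}, {c, d}]"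
proof (rule shortest_path_length4)
  show "walk line_adj H [{a, b}, {b, v}, {c, v}, {c, d}]"
    using assms new_vertices distinct
    by (auto simp: walk_iff_successively line_adj_def doubleton_eq_iff)
  show "{a, b} \<noteq> {c, d}" "\<not> line_adj {a, b} {c, d}"
    using distinct unfolding line_adj_def by (auto simp: doubleton_eq_iff)
  show "\<not> (\<exists>m\<in>H. line_adj {a, b} m \<and> line_adj m {c, d})"
    using neighbours_of_ab neighbours_of_cd no_edge_through_b_and_c line_adj_sym by blast
qed

lemma E'_common_neighbour:
  assumes "s \<in> E'" "t \<in> H" "s \<inter> t = {}"
  shows "\<exists>m\<in>H. s \<inter> m \<noteq> {} \<and> m \<inter> t \<noteq> {}"
proof -
  obtain x y where s: "s = {x, y}" "y \<in> V" "x = b \<or> x = c"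
    using assms(1) by (elim E'_cases) auto
  from assms(2) show ?thesis
  proof (cases rule: H_cases)
    case 1
    then obtain p where "p \<in> t" "p \<in> V" using simple_graph_edgeD[OF simple] by blast
    then show ?thesis using s by (intro bexI[of _ "{x, p}"]) auto
  next
    case 2
    then show ?thesis using s assms(3) by (intro bexI[of _ "{b, y}"]) auto
  next
    case 3
    then show ?thesis using s assms(3) by (intro bexI[of _ "{c, y}"]) auto
  next
    case 4
    then show ?thesis
    proof (cases rule: E'_cases)
      case (1 v)
      then show ?thesis using s assms(3) by (intro bexI[of _ "{c, v}"]) auto
    next
      case (2 v)
      then show ?thesis using s assms(3) by (intro bexI[of _ "{b, v}"]) auto
    qed
  qed
qed

lemma shortest_path_from_E'_length:
  assumes "shortest_path line_adj H u v p" "u \<in> E' \<or> v \<in> E'"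
  shows "length p \<le> 3"
proof -
  have uv: "u \<in> H" "v \<in> H" using assms(1) unfolding shortest_path_def walk_def by auto
  have "\<exists>q. walk line_adj H q \<and> hd q = u \<and> last q = v \<and> length q \<le> 3"
  proof (cases "u = v \<or> line_adj u v")
    case True
    then show ?thesis using uv
      by (intro exI[of _ "if u = v then [u] else [u, v]"]) (auto simp: walk_iff_successively)
  next
    case False
    then have "u \<inter> v = {}" unfolding line_adj_def by blast
    then obtain m where "m \<in> H" "u \<inter> m \<noteq> {}" "m \<inter> v \<noteq> {}"
      using E'_common_neighbour assms(2) uv by (metis Int_commute)
    then have "walk line_adj H [u, m, v]"
      using uv \<open>u \<inter> v = {}\<close> by (auto simp: walk_iff_successively line_adj_def)
    then show ?thesis by (intro exI[of _ "[u, m, v]"]) auto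
  qed
  then show ?thesis using assms(1) unfolding shortest_path_def by fastforce
qed

definition replacement :: "'a set \<Rightarrow> 'a set" where
  "replacement s =
     (if s \<notin> E' then s
      else if \<exists>f\<in>E. f \<inter> s \<noteq> {} then SOME f. f \<in> E \<and> f \<inter> s \<noteq> {}
      else {a, b})"

lemma replacement_id: "s \<notin> E' \<Longrightarrow> replacement s = s"
  unfolding replacement_def by simp

lemma replacement_mem:
  assumes "s \<in> H"
  shows "replacement s \<in> H \<and> replacement s \<notin> E'"
proof -
  have "(SOME f. f \<in> E \<and> f \<inter> s \<noteq> {}) \<in> E" if "\<exists>f\<in>E. f \<inter> s \<noteq> {}"
    using that by (metis (mono_tags, lifting) someI_ex)
  then show ?thesis using assms unfolding replacement_def by simp
qed

lemma replacement_at_E_edge: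
  assumes "s \<in> H" "x \<in> E" "y \<in> x" "y \<in> s" "z \<in> x" "z \<notin> s"
  shows "replacement s = x \<or> replacement s \<in> E \<and> y \<in> replacement s \<and> z \<notin> replacement s"
proof (cases "s \<in> E'")
  case True
  have "y \<in> V" using assms(2,3) E_subset_V by blast
  then have s_V: "s \<inter> V = {y}" using E'_inter_V[OF True] assms(4) by (metis IntI singletonD)
  let ?f = "SOME f. f \<in> E \<and> f \<inter> s \<noteq> {}"
  have ex: "\<exists>f\<in>E. f \<inter> s \<noteq> {}" using assms(2-4) by blast
  then have "?f \<in> E \<and> ?f \<inter> s \<noteq> {}" by (metis (mono_tags, lifting) someI_ex)
  moreover have "replacement s = ?f" using True ex unfolding replacement_def by simp
  ultimately have "replacement s \<in> E \<and> replacement s \<inter> s \<noteq> {}" by simp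
  then obtain w where f: "replacement s \<in> E" "w \<in> replacement s" "w \<in> s" by blast
  then have "w \<in> s \<inter> V" using E_subset_V by blast
  with f have y_f: "y \<in> replacement s" using s_V by simp
  have "y \<noteq> z" using assms(4,6) by blast
  then have "replacement s = x" if "z \<in> replacement s"
    using simple_graph_edge_eq[OF simple, of "replacement s" y z]
      simple_graph_edge_eq[OF simple, of x y z] f(1) y_f that assms(2,3,5) by simp
  then show ?thesis using f(1) y_f by blast
next
  case False
  have "y \<in> V" using assms(2,3) E_subset_V by blast
  have "s \<in> E" using assms(1)
  proof (cases rule: H_cases)
    case 2
    then show ?thesis using \<open>y \<in> V\<close> assms(4) new_vertices by auto
  next
    case 3
    then show ?thesis using \<open>y \<in> V\<close> assms(4) new_vertices by auto
  next
    case 4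
    then show ?thesis using False by blast
  qed
  then show ?thesis using False assms(4,6) replacement_id by simp
qed

lemma shortest_path_through_E_edge:
  assumes "{y, z} \<in> E"
    and "e \<in> E" "y \<in> e" "z \<notin> e" and "f \<in> E" "z \<in> f" "y \<notin> f"
  shows "shortest_path line_adj H e f [e, {y, z}, f]"
proof (rule shortest_path_length3)
  have "e \<inter> f = {}"
    using triangle_free_edges_disjoint[OF simple triangle_free] assms by blast
  then show "e \<noteq> f" "\<not> line_adj e f"
    using assms(3) unfolding line_adj_def by auto
  have "line_adj e {y, z}" "line_adj {y, z} f"
    using line_adjI[of e "{y, z}" y] line_adjI[of "{y, z}" f z] assms(3,4,6,7) by auto
  then show "walk line_adj H [e, {y, z}, f]"
    using assms(1,2,5) by (simp add: walk_iff_successively)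
qed

lemma E_edge_covered_by_replacement:
  assumes "line_geodetic_set H S" "x \<in> E" "x \<notin> replacement ` S"
  shows "\<exists>u\<in>replacement ` S. \<exists>v\<in>replacement ` S. \<exists>p.
           shortest_path line_adj H u v p \<and> x \<in> set p"
proof -
  have "replacement x = x" using assms(2) by (simp add: replacement_id)
  then have "x \<notin> S" using assms(3) imageI[of x S replacement] by auto
  obtain u v p where uv: "u \<in> S" "v \<in> S" and sp: "shortest_path line_adj H u v p"
    and "x \<in> set p"
    using assms(1) in_H(5)[OF assms(2)] unfolding line_geodetic_set_def geodetic_set_def by blast
  show ?thesis
  proof (cases "u \<in> E' \<or> v \<in> E'")
    case False
    then have "replacement u = u" "replacement v = v" by (simp_all add: replacement_id)
    then have "u \<in> replacement ` S" "v \<in> replacement ` S"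
      using uv imageI[of _ S replacement] by metis+
    then show ?thesis using sp \<open>x \<in> set p\<close> by blast
  next
    case True
    have ends: "hd p = u" "last p = v" and walk: "walk line_adj H p"
      using sp unfolding shortest_path_def by auto
    have "x \<noteq> hd p" "x \<noteq> last p" using ends uv \<open>x \<notin> S\<close> by auto
    with \<open>x \<in> set p\<close> obtain xs w1 w2 ys where "p = xs @ w1 # x # w2 # ys"
      by (rule interior_of_list)
    with shortest_path_from_E'_length[OF sp True] ends have p: "p = [u, x, v]" by simp
    have "u \<noteq> v \<and> \<not> line_adj u v"
      using shortest_path_interior_nonadjacent[of line_adj H u v "[]" u x v "[]"] sp p by simp
    then have "u \<inter> v = {}" unfolding line_adj_def by blast
    have "line_adj u x" "line_adj x v" "u \<in> H" "v \<in> H"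
      using walk p by (simp_all add: walk_iff_successively)
    then obtain y z where y: "y \<in> u" "y \<in> x" and z: "z \<in> v" "z \<in> x"
      unfolding line_adj_def by blast
    then have yz: "y \<notin> v" "z \<notin> u" using \<open>u \<inter> v = {}\<close> by blast+
    then have x: "x = {y, z}" using simple_graph_edge_eq[OF simple assms(2)] y z by blast
    have "replacement u \<noteq> x" "replacement v \<noteq> x" using uv assms(3) by blast+
    then have ru: "replacement u \<in> E" "y \<in> replacement u" "z \<notin> replacement u"
      and rv: "replacement v \<in> E" "z \<in> replacement v" "y \<notin> replacement v"
      using replacement_at_E_edge[OF \<open>u \<in> H\<close> assms(2) y(2,1) z(2) yz(2)]
        replacement_at_E_edge[OF \<open>v \<in> H\<close> assms(2) z(2,1) y(2) yz(1)] by blast+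
    have "shortest_path line_adj H (replacement u) (replacement v) [replacement u, x, replacement v]"
      using shortest_path_through_E_edge[OF _ ru rv] assms(2) unfolding x by blast
    moreover have "x \<in> set [replacement u, x, replacement v]" by simp
    moreover have "replacement u \<in> replacement ` S" "replacement v \<in> replacement ` S"
      using uv by simp_all
    ultimately show ?thesis by blast
  qed
qed

lemma line_geodetic_set_replacement:
  assumes "line_geodetic_set H S"
  shows "line_geodetic_set H (replacement ` S)"
proof -
  let ?Q = "replacement ` S"
  have "S \<subseteq> H" using assms unfolding line_geodetic_set_def geodetic_set_def by blast
  then have "?Q \<subseteq> H" using replacement_mem by blast
  have "{a, b} \<in> S"
    by (rule pendant_edge_in_line_geodetic_set[OF assms in_H(1) neighbours_of_ab])
  then have ab: "{a, b} \<in> ?Q" using replacement_id[OF not_in_E'(1)] by force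
  have "{c, d} \<in> S"
    by (rule pendant_edge_in_line_geodetic_set[OF assms in_H(2) neighbours_of_cd])
  then have cd: "{c, d} \<in> ?Q" using replacement_id[OF not_in_E'(2)] by force
  have "\<exists>u\<in>?Q. \<exists>v\<in>?Q. \<exists>p. shortest_path line_adj H u v p \<and> x \<in> set p" if "x \<in> H" for x
  proof (cases "x \<in> ?Q")
    case True
    then show ?thesis using shortest_path_singleton[of x H line_adj] that
      by (intro bexI[OF _ True] exI[of _ "[x]"]) simp
  next
    case False
    from \<open>x \<in> H\<close> show ?thesis
    proof (cases rule: H_cases)
      case 1
      then show ?thesis using E_edge_covered_by_replacement assms False by blast
    next
      case 2
      then show ?thesis using False ab by simp
    next
      case 3
      then show ?thesis using False cd by simp
    next
      case 4
      then obtain v where "v \<in> V" "x \<in> set [{a, b}, {b, v}, {c, v}, {c, d}]"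
        by (elim E'_cases) auto
      then show ?thesis
        using shortest_path_ab_cd ab cd by blast
    qed
  qed
  then show ?thesis
    using \<open>?Q \<subseteq> H\<close> unfolding line_geodetic_set_def geodetic_set_def by blast
qed

end

theorem mainTheorem7:
  fixes V :: "'a set" and E :: "'a set set" and a b c d :: 'a
  assumes "simple_graph V E"
    and "triangle_free E"
    and "a \<notin> V" and "b \<notin> V" and "c \<notin> V" and "d \<notin> V"
    and "distinct [a, b, c, d]"
  shows "\<exists>Q. line_geodetic_set (HG_edges E V a b c d) Q \<and>
           (\<forall>S. line_geodetic_set (HG_edges E V a b c d) S \<longrightarrow> card Q \<le> card S) \<and>
           Q \<inter> Eprime V b c = {}"
proof -
  interpret HG_construction V E a b c d
    using assms by unfold_locales
  obtain S where S: "line_geodetic_set H S"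
    and minimal: "\<forall>S'. line_geodetic_set H S' \<longrightarrow> card S \<le> card S'"
    using ex_has_least_nat[of "line_geodetic_set H" H card] geodetic_set_carrier[of line_adj H]
    unfolding line_geodetic_set_def by blast
  have "S \<subseteq> H" using S unfolding line_geodetic_set_def geodetic_set_def by blast
  then have "card (replacement ` S) \<le> card S"
    using finite_H finite_subset card_image_le by blast
  moreover have "replacement ` S \<inter> E' = {}"
    using \<open>S \<subseteq> H\<close> replacement_mem by blast
  ultimately show ?thesis
    using line_geodetic_set_replacement[OF S] minimal
    by (intro exI[of _ "replacement ` S"]) (meson le_trans)
qed

end
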